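(* Let $A\subseteq\mathbb{R}$ be open, $x\in A$, and $f:A\to\mathbb{R}$ locally Lipschitz. The following are equivalent: (1) $f$ is differentiable at $x$; (2) there exists a unique $m\in\mathbb{R}$ such that ${}^\bullet f(x+h)=f(x)+h\cdot m$ in ${}^\bullet\mathbb{R}$ for all $h\in D$. In this case $m=f'(x)$.
   Context: A function $x:\mathbb{R}\to\mathbb{R}$ is nilpotent if $|x(t)-x(0)|^k=o(t)$ as $t\to0$ for some $k\in\mathbb{N}$; for $A\subseteq\mathbb{R}$, $\mathrm{Nil}(A)$ is the set of nilpotent functions with values in $A$. For such $x,y$, $x\sim y$ iff $x(t)=y(t)+o(t)$ as $t\to0$. ${}^\bullet A:=\mathrm{Nil}(A)/\sim$, identified with a subset of ${}^\bullet\mathbb{R}:=\mathrm{Nil}(\mathbb{R})/\sim$ (a commutative ring under pointwise operations, reals identified with constant functions). For locally Lipschitz $f:A\to\mathbb{R}$, ${}^\bullet f([y]):=[f\circ y]$ on ${}^\bullet A$. $D:=\{h\in{}^\bullet\mathbb{R}:\limsup_{t\to0}|h(t)/t|<+\infty\}$. For $h\in D$ and $x\in A$ open, $x+h\in{}^\bullet A$, so ${}^\bullet f(x+h)$ is defined. *)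

theory Defs
  imports "HOL-Analysis.Analysis" "HOL-Library.Landau_Symbols"
begin

definition nilpotent :: "(real \<Rightarrow> real) \<Rightarrow> bool" where
  "nilpotent x \<longleftrightarrow> (\<exists>k::nat. (\<lambda>t. \<bar>x t - x 0\<bar> ^ k) \<in> o[at 0](\<lambda>t. t))"

definition Nil_fun :: "real set \<Rightarrow> (real \<Rightarrow> real) set" where
  "Nil_fun A = {x. nilpotent x \<and> (\<forall>t. x t \<in> A)}"

definition fr_eqv :: "(real \<Rightarrow> real) \<Rightarrow> (real \<Rightarrow> real) \<Rightarrow> bool" where
  "fr_eqv x y \<longleftrightarrow> (\<lambda>t. x t - y t) \<in> o[at 0](\<lambda>t. t)"

definition in_D :: "(real \<Rightarrow> real) \<Rightarrow> bool" where
  "in_D h \<longleftrightarrow> nilpotent h \<and> h \<in> O[at 0](\<lambda>t. t)"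

text \<open>ext_val f A X Z means: the class [X] lies in the extension of A (it has a
  representative y in Nil(A)) and the extension of f maps [X] to [Z],
  i.e. [f \<circ> y] = [Z].\<close>
definition ext_val :: "(real \<Rightarrow> real) \<Rightarrow> real set \<Rightarrow> (real \<Rightarrow> real) \<Rightarrow> (real \<Rightarrow> real) \<Rightarrow> bool" where
  "ext_val f A X Z \<longleftrightarrow> (\<exists>y \<in> Nil_fun A. fr_eqv y X \<and> fr_eqv (f \<circ> y) Z)"

definition locally_lipschitz_on :: "real set \<Rightarrow> (real \<Rightarrow> real) \<Rightarrow> bool" where
  "locally_lipschitz_on A f \<longleftrightarrow>
     (\<forall>a\<in>A. \<exists>e>0. \<exists>L. L-lipschitz_on (cball a e \<inter> A) f)"

end

theory Submission
  imports Defs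
begin

(* Both directions are first-order expansions modulo o(t). If f'(x) = m, Caratheodory's form
   f z - f x = g z * (z - x), with g continuous at x, gives
   f (x + h t) = f x + h t * m + h t * (g (x + h t) - m), and the last term is O(t) * o(1) = o(t)
   for h in D. Conversely, a representative y in Nil(A) of x + t differs from x + t by o(t), and
   the Lipschitz bound turns this into f (y t) - f (x + t) = o(t); so f (x + t) = f x + t * m + o(t),
   i.e. f'(x) = m, which also gives uniqueness of m. *)

lemma bigo_tendsto_zero:
  assumes "f \<in> O[F](g)" "(g \<longlongrightarrow> 0) F"
  shows "(f \<longlongrightarrow> 0) F"
proof -
  have "g \<in> o[F](\<lambda>_. 1)"
    using assms(2) by (intro smalloI_tendsto) auto
  with assms(1) have "f \<in> o[F](\<lambda>_. 1)"
    by (rule landau_o.big_small_trans)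
  then show ?thesis
    using smalloD_tendsto by fastforce
qed

lemma smallo_id_tendsto_zero:
  assumes "f \<in> o[at 0](\<lambda>t. t)"
  shows "(f \<longlongrightarrow> 0) (at 0)"
  using landau_o.small_imp_big[OF assms] tendsto_ident_at by (rule bigo_tendsto_zero)

lemma bigo_mult_tendsto_zero_in_smallo:
  assumes "f \<in> O[F](g)" "(q \<longlongrightarrow> 0) F"
  shows "(\<lambda>x. f x * q x) \<in> o[F](g)"
proof -
  have "q \<in> o[F](\<lambda>_. 1)"
    using assms(2) by (intro smalloI_tendsto) auto
  with assms(1) show ?thesis
    by (rule landau_o.small_1_mult'')
qed

lemma has_field_derivative_iff_smallo:
  fixes f :: "'a::real_normed_field \<Rightarrow> 'a"
  shows "(f has_field_derivative m) (at x) \<longleftrightarrow> (\<lambda>u. f (x + u) - f x - u * m) \<in> o[at 0](\<lambda>u. u)"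
proof -
  have quotient: "eventually (\<lambda>u. (f (x + u) - f x - u * m) / u = (f (x + u) - f x) / u - m) (at 0)"
    by (auto simp: eventually_at_filter diff_divide_distrib)
  have "(\<lambda>u. f (x + u) - f x - u * m) \<in> o[at 0](\<lambda>u. u)
        \<longleftrightarrow> ((\<lambda>u. (f (x + u) - f x - u * m) / u) \<longlongrightarrow> 0) (at 0)"
    by (auto intro: smalloI_tendsto smalloD_tendsto simp: eventually_at_filter)
  also have "\<dots> \<longleftrightarrow> ((\<lambda>u. (f (x + u) - f x) / u - m) \<longlongrightarrow> 0) (at 0)"
    by (rule tendsto_cong[OF quotient])
  also have "\<dots> \<longleftrightarrow> (f has_field_derivative m) (at x)"
    by (simp add: DERIV_def LIM_zero_iff)
  finally show ?thesis ..
qed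

lemma fr_eqv_if_eventually_eq:
  assumes "eventually (\<lambda>t. x t = y t) (at 0)"
  shows "fr_eqv x y"
  unfolding fr_eqv_def
proof (rule landau_o.smallI)
  fix c :: real
  assume "c > 0"
  from assms show "eventually (\<lambda>t. norm (x t - y t) \<le> c * norm t) (at 0)"
    by eventually_elim (use \<open>c > 0\<close> in simp)
qed

lemma fr_eqv_sym:
  assumes "fr_eqv x y"
  shows "fr_eqv y x"
proof -
  have "(\<lambda>t. - (x t - y t)) \<in> o[at 0](\<lambda>t. t)"
    using assms by (simp only: fr_eqv_def landau_o.small.uminus_in_iff)
  then show ?thesis
    by (simp add: fr_eqv_def)
qed

lemma fr_eqv_trans:
  assumes "fr_eqv x y" "fr_eqv y z"
  shows "fr_eqv x z"
proof -
  have "(\<lambda>t. (x t - y t) + (y t - z t)) \<in> o[at 0](\<lambda>t. t)"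
    using assms unfolding fr_eqv_def by (rule sum_in_smallo(1))
  then show ?thesis
    by (simp add: fr_eqv_def)
qed

lemma fr_eqv_tendsto:
  assumes "fr_eqv x y" "(y \<longlongrightarrow> l) (at 0)"
  shows "(x \<longlongrightarrow> l) (at 0)"
proof -
  have "((\<lambda>t. x t - y t) \<longlongrightarrow> 0) (at 0)"
    using assms(1) unfolding fr_eqv_def by (rule smallo_id_tendsto_zero)
  from tendsto_add[OF this assms(2)] show ?thesis
    by simp
qed

lemma in_D_id: "in_D (\<lambda>t. t)"
proof -
  have "(\<lambda>t::real. t * t) \<in> o[at 0](\<lambda>t. t)"
    using landau_o.big_refl tendsto_ident_at by (rule bigo_mult_tendsto_zero_in_smallo)
  then have "nilpotent (\<lambda>t. t)"
    unfolding nilpotent_def by (intro exI[of _ 2]) (simp add: power2_eq_square)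
  then show ?thesis
    by (simp add: in_D_def)
qed

lemma in_D_tendsto_zero:
  assumes "in_D h"
  shows "(h \<longlongrightarrow> 0) (at 0)"
  using assms tendsto_ident_at unfolding in_D_def by (blast intro: bigo_tendsto_zero)

lemma in_D_shift_tendsto:
  assumes "in_D h"
  shows "((\<lambda>t. x + h t) \<longlongrightarrow> x) (at 0)"
  using tendsto_add[OF tendsto_const[of x] in_D_tendsto_zero[OF assms]] by simp

lemma in_D_at_zero:
  assumes "in_D h"
  shows "h 0 = 0"
proof -
  obtain k where "(\<lambda>t. \<bar>h t - h 0\<bar> ^ k) \<in> o[at 0](\<lambda>t. t)"
    using assms unfolding in_D_def nilpotent_def by blast
  then have "((\<lambda>t. \<bar>h t - h 0\<bar> ^ k) \<longlongrightarrow> 0) (at 0)"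
    by (rule smallo_id_tendsto_zero)
  moreover have "((\<lambda>t. \<bar>h t - h 0\<bar> ^ k) \<longlongrightarrow> \<bar>0 - h 0\<bar> ^ k) (at 0)"
    using in_D_tendsto_zero[OF assms] by (intro tendsto_power tendsto_rabs tendsto_diff tendsto_const)
  ultimately have "\<bar>0 - h 0\<bar> ^ k = 0"
    by (rule tendsto_unique[OF at_neq_bot, rotated])
  then show ?thesis \<comment> \<open>k = 0 is excluded, since the constant 1 is not o(t)\<close>
    by simp
qed

lemma ext_val_shift_if_fr_eqv:
  assumes "open A" "x \<in> A" "in_D h" "fr_eqv (\<lambda>t. f (x + h t)) Z"
  shows "ext_val f A (\<lambda>t. x + h t) Z"
proof -
  \<comment> \<open>x + h t may leave A away from t = 0; redirecting it to x there changes nothing modulo o(t)\<close>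
  define y where "y t = (if x + h t \<in> A then x + h t else x)" for t
  have "eventually (\<lambda>t. x + h t \<in> A) (at 0)"
    using in_D_shift_tendsto[OF assms(3)] assms(1,2) by (rule topological_tendstoD)
  then have y_near: "eventually (\<lambda>t. y t = x + h t) (at 0)"
    by eventually_elim (simp add: y_def)
  have "y 0 = x"
    using assms(2) by (simp add: y_def in_D_at_zero[OF assms(3)])
  have "eventually (\<lambda>t. \<bar>y t - y 0\<bar> ^ 2 = h t * h t) (at 0)"
    using y_near by eventually_elim (simp add: \<open>y 0 = x\<close> power2_eq_square)
  moreover have "(\<lambda>t. h t * h t) \<in> o[at 0](\<lambda>t. t)"
    using assms(3) in_D_tendsto_zero[OF assms(3)] unfolding in_D_def
    by (blast intro: bigo_mult_tendsto_zero_in_smallo)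
  ultimately have "(\<lambda>t. \<bar>y t - y 0\<bar> ^ 2) \<in> o[at 0](\<lambda>t. t)"
    by (subst landau_o.small.in_cong)
  then have "nilpotent y"
    unfolding nilpotent_def by blast
  then have "y \<in> Nil_fun A"
    using assms(2) by (simp add: Nil_fun_def y_def)
  moreover have "fr_eqv y (\<lambda>t. x + h t)"
    using y_near by (rule fr_eqv_if_eventually_eq)
  moreover have "fr_eqv (f \<circ> y) (\<lambda>t. f (x + h t))"
    using y_near by (intro fr_eqv_if_eventually_eq) (auto elim: eventually_mono)
  then have "fr_eqv (f \<circ> y) Z"
    using assms(4) by (rule fr_eqv_trans)
  ultimately show ?thesis
    unfolding ext_val_def by blast
qed

lemma ext_val_affine_if_has_real_derivative:
  assumes "open A" "x \<in> A" "(f has_real_derivative m) (at x)" "in_D h"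
  shows "ext_val f A (\<lambda>t. x + h t) (\<lambda>t. f x + h t * m)"
proof (rule ext_val_shift_if_fr_eqv[OF assms(1,2,4)])
  obtain g where g: "\<And>z. f z - f x = g z * (z - x)" "isCont g x" "g x = m"
    using assms(3) by (auto simp: CARAT_DERIV)
  have "((\<lambda>t. g (x + h t) - m) \<longlongrightarrow> 0) (at 0)"
    using isCont_tendsto_compose[OF g(2) in_D_shift_tendsto[OF assms(4)]] g(3)
    by (simp add: LIM_zero_iff)
  with assms(4) have "(\<lambda>t. h t * (g (x + h t) - m)) \<in> o[at 0](\<lambda>t. t)"
    by (intro bigo_mult_tendsto_zero_in_smallo) (simp_all add: in_D_def)
  moreover have "f (x + h t) - (f x + h t * m) = h t * (g (x + h t) - m)" for t
    using g(1)[of "x + h t"] by (simp add: algebra_simps)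
  ultimately show "fr_eqv (\<lambda>t. f (x + h t)) (\<lambda>t. f x + h t * m)"
    by (simp add: fr_eqv_def)
qed

lemma fr_eqv_comp_if_locally_lipschitz:
  assumes "locally_lipschitz_on A f" "x \<in> A" "fr_eqv y z" "(z \<longlongrightarrow> x) (at 0)"
    and "eventually (\<lambda>t. y t \<in> A) (at 0)" "eventually (\<lambda>t. z t \<in> A) (at 0)"
  shows "fr_eqv (f \<circ> y) (f \<circ> z)"
proof -
  obtain e L where "e > 0" and lip: "L-lipschitz_on (cball x e \<inter> A) f"
    using assms(1,2) unfolding locally_lipschitz_on_def by blast
  have near: "eventually (\<lambda>t. w t \<in> cball x e) (at 0)" if "(w \<longlongrightarrow> x) (at 0)" for w
    using tendstoD[OF that \<open>e > 0\<close>] by eventually_elim (simp add: dist_commute)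
  have "eventually (\<lambda>t. y t \<in> cball x e) (at 0)"
    using fr_eqv_tendsto[OF assms(3,4)] by (rule near)
  moreover have "eventually (\<lambda>t. z t \<in> cball x e) (at 0)"
    using assms(4) by (rule near)
  ultimately have "eventually (\<lambda>t. norm (f (y t) - f (z t)) \<le> L * norm (y t - z t)) (at 0)"
    using assms(5,6)
  proof eventually_elim
    case (elim t)
    then have "dist (f (y t)) (f (z t)) \<le> L * dist (y t) (z t)"
      by (intro lipschitz_onD[OF lip]) auto
    then show ?case
      by (simp add: dist_norm)
  qed
  then have "(\<lambda>t. f (y t) - f (z t)) \<in> O[at 0](\<lambda>t. y t - z t)"
    by (rule bigoI)
  then show ?thesis
    using assms(3) unfolding fr_eqv_def by (simp add: landau_o.big_small_trans)
qed

lemma has_real_derivative_if_ext_val_affine: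
  assumes "open A" "x \<in> A" "locally_lipschitz_on A f"
    and "ext_val f A (\<lambda>t. x + t) (\<lambda>t. f x + t * m)"
  shows "(f has_real_derivative m) (at x)"
proof -
  obtain y where y: "y \<in> Nil_fun A" "fr_eqv y (\<lambda>t. x + t)" "fr_eqv (f \<circ> y) (\<lambda>t. f x + t * m)"
    using assms(4) unfolding ext_val_def by blast
  have shift: "((\<lambda>t. x + t) \<longlongrightarrow> x) (at 0)"
    using in_D_shift_tendsto[OF in_D_id] .
  then have "eventually (\<lambda>t. x + t \<in> A) (at 0)"
    using assms(1,2) by (rule topological_tendstoD)
  moreover have "eventually (\<lambda>t. y t \<in> A) (at 0)"
    using y(1) by (simp add: Nil_fun_def)
  ultimately have "fr_eqv (f \<circ> y) (f \<circ> (\<lambda>t. x + t))"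
    using fr_eqv_comp_if_locally_lipschitz[OF assms(3,2) y(2) shift] by blast
  then have "fr_eqv (\<lambda>t. f (x + t)) (\<lambda>t. f x + t * m)"
    using fr_eqv_trans[OF fr_eqv_sym y(3)] by (simp add: o_def)
  then show ?thesis
    by (simp add: has_field_derivative_iff_smallo fr_eqv_def diff_diff_eq)
qed

theorem mainTheorem11:
  fixes A :: "real set" and x :: real and f :: "real \<Rightarrow> real"
  assumes "open A" and "x \<in> A" and "locally_lipschitz_on A f"
  shows "(f differentiable (at x) \<longleftrightarrow>
           (\<exists>!m::real. \<forall>h. in_D h \<longrightarrow>
              ext_val f A (\<lambda>t. x + h t) (\<lambda>t. f x + h t * m)))
         \<and> (f differentiable (at x) \<longrightarrow>
           (\<forall>m::real. (\<forall>h. in_D h \<longrightarrow>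
              ext_val f A (\<lambda>t. x + h t) (\<lambda>t. f x + h t * m)) \<longrightarrow> m = deriv f x))"
proof -
  let ?affine = "\<lambda>m. \<forall>h. in_D h \<longrightarrow> ext_val f A (\<lambda>t. x + h t) (\<lambda>t. f x + h t * m)"
  have derivative: "(f has_real_derivative m) (at x)" if "?affine m" for m
    using that in_D_id by (intro has_real_derivative_if_ext_val_affine[OF assms]) blast
  have unique: "m = deriv f x" if "?affine m" for m
    using DERIV_imp_deriv[OF derivative[OF that]] by simp
  have "?affine (deriv f x)" if "f differentiable (at x)"
    using that ext_val_affine_if_has_real_derivative[OF assms(1,2)]
    by (simp add: DERIV_deriv_iff_real_differentiable)
  with unique have "f differentiable (at x) \<Longrightarrow> \<exists>!m. ?affine m"
    by blast
  moreover have "\<exists>m. ?affine m \<Longrightarrow> f differentiable (at x)"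
    using derivative real_differentiable_def by blast
  ultimately show ?thesis
    using unique by blast
qed

end
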